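(* Let $G$ be a connected graph on more than one vertex. Then $\chi_{alg}(G)=2$ if and only if $\chi(G)=2$.
   Context: Graphs are finite, loopless, with symmetric edge sets; $K_c$ is the complete graph on $c$ vertices; $\chi(G)$ is the usual chromatic number. For $|I|=n$, $|O|=m$ ($O=\{0,\dots,m-1\}$), $\mathbb F(n,m)$ is the free product of $n$ copies of the cyclic group of order $m$ with generators $u_v$, $\mathbb C[\mathbb F(n,m)]$ its group $*$-algebra, $\omega=e^{2\pi i/m}$, $e_{v,a}=\frac1m\sum_{k=0}^{m-1}(\omega^{-a}u_v)^k$. For graphs $G,H$, the graph homomorphism game has $I=V(G)$, $O=V(H)$, $\lambda(v,w,a,b)=0$ iff ($v=w$, $a\ne b$) or ($(v,w)\in E(G)$, $(a,b)\notin E(H)$); $\mathcal I(G,H)$ is the two-sided $*$-ideal generated by $\{e_{v,a}e_{w,b}:\lambda(v,w,a,b)=0\}$, $\mathcal A(G,H)$ the quotient, and $\chi_{alg}(G)=\min\{c:\mathcal A(G,K_c)\ne0\}$. *)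

theory Defs
  imports Complex_Main
begin

section \<open>The free product F(n,m) of n copies of Z/m, as reduced words\<close>

text \<open>A word is a list of letters (v,k), standing for u_v^k.  The reduced words are the elements of F(n,m), n = card I.\<close>

type_synonym 'v word = "('v \<times> nat) list"

definition reduced :: "nat \<Rightarrow> 'v set \<Rightarrow> 'v word \<Rightarrow> bool" where
  "reduced m I w \<longleftrightarrow> (\<forall>(v,k)\<in>set w. v \<in> I \<and> 0 < k \<and> k < m) \<and> successively (\<noteq>) (map fst w)"

text \<open>Left multiplication of a reduced word by u_v^k.\<close>
fun ins :: "nat \<Rightarrow> 'v \<times> nat \<Rightarrow> 'v word \<Rightarrow> 'v word" where
  "ins m (v,k) [] = (if k mod m = 0 then [] else [(v, k mod m)])"
| "ins m (v,k) ((w,j) # ys) =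
     (if v = w then (if (k + j) mod m = 0 then ys else (v, (k + j) mod m) # ys)
      else if k mod m = 0 then (w,j) # ys else (v, k mod m) # (w,j) # ys)"

definition wmult :: "nat \<Rightarrow> 'v word \<Rightarrow> 'v word \<Rightarrow> 'v word" where
  "wmult m xs ys = foldr (ins m) xs ys"

definition winv :: "nat \<Rightarrow> 'v word \<Rightarrow> 'v word" where
  "winv m xs = rev (map (\<lambda>(v,k). (v, m - k)) xs)"

definition gen :: "nat \<Rightarrow> 'v \<Rightarrow> 'v word" where
  "gen m v = ins m (v, 1) []"

definition supp :: "('a \<Rightarrow> complex) \<Rightarrow> 'a set" where
  "supp f = {x. f x \<noteq> 0}"

definition gralg :: "nat \<Rightarrow> 'v set \<Rightarrow> ('v word \<Rightarrow> complex) set" where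
  "gralg m I = {f. finite (supp f) \<and> (\<forall>x\<in>supp f. reduced m I x)}"

definition conv :: "nat \<Rightarrow> ('v word \<Rightarrow> complex) \<Rightarrow> ('v word \<Rightarrow> complex) \<Rightarrow> ('v word \<Rightarrow> complex)" where
  "conv m f g = (\<lambda>z. \<Sum>(x,y)\<in>supp f \<times> supp g. if wmult m x y = z then f x * g y else 0)"

definition gstar :: "nat \<Rightarrow> ('v word \<Rightarrow> complex) \<Rightarrow> ('v word \<Rightarrow> complex)" where
  "gstar m f = (\<lambda>x. cnj (f (winv m x)))"

definition delta :: "'v word \<Rightarrow> ('v word \<Rightarrow> complex)" where
  "delta w = (\<lambda>x. if x = w then 1 else 0)"

definition smul :: "complex \<Rightarrow> ('v word \<Rightarrow> complex) \<Rightarrow> ('v word \<Rightarrow> complex)" where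
  "smul c f = (\<lambda>x. c * f x)"

definition gpow :: "nat \<Rightarrow> ('v word \<Rightarrow> complex) \<Rightarrow> nat \<Rightarrow> ('v word \<Rightarrow> complex)" where
  "gpow m f k = (conv m f ^^ k) (delta [])"

definition omega :: "nat \<Rightarrow> complex" where
  "omega m = cis (2 * pi / real m)"

definition proj :: "nat \<Rightarrow> 'v \<Rightarrow> nat \<Rightarrow> ('v word \<Rightarrow> complex)" where
  "proj m v a = (\<lambda>x. (1 / of_nat m) *
     (\<Sum>k<m. gpow m (smul (inverse (omega m) ^ a) (delta (gen m v))) k x))"

inductive_set gideal :: "nat \<Rightarrow> 'v set \<Rightarrow> ('v word \<Rightarrow> complex) set \<Rightarrow> ('v word \<Rightarrow> complex) set"
  for m I S where
  base: "s \<in> S \<Longrightarrow> s \<in> gideal m I S"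
| zero: "(\<lambda>_. 0) \<in> gideal m I S"
| add: "f \<in> gideal m I S \<Longrightarrow> g \<in> gideal m I S \<Longrightarrow> (\<lambda>x. f x + g x) \<in> gideal m I S"
| left: "f \<in> gideal m I S \<Longrightarrow> a \<in> gralg m I \<Longrightarrow> conv m a f \<in> gideal m I S"
| right: "f \<in> gideal m I S \<Longrightarrow> a \<in> gralg m I \<Longrightarrow> conv m f a \<in> gideal m I S"
| star: "f \<in> gideal m I S \<Longrightarrow> gstar m f \<in> gideal m I S"

definition graph :: "'v set \<Rightarrow> ('v \<times> 'v) set \<Rightarrow> bool" where
  "graph V E \<longleftrightarrow> finite V \<and> E \<subseteq> V \<times> V \<and> sym E \<and> (\<forall>v. (v,v) \<notin> E)"

definition connected_graph :: "'v set \<Rightarrow> ('v \<times> 'v) set \<Rightarrow> bool" where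
  "connected_graph V E \<longleftrightarrow> (\<forall>v\<in>V. \<forall>w\<in>V. (v,w) \<in> E\<^sup>*)"

text \<open>The predicate lambda of the homomorphism game G -> K_c (V(K_c) = {0..<c},
  edges of K_c: a \<noteq> b).  lam_zero holds iff lambda(v,w,a,b) = 0.\<close>
definition lam_zero :: "('v \<times> 'v) set \<Rightarrow> 'v \<Rightarrow> 'v \<Rightarrow> nat \<Rightarrow> nat \<Rightarrow> bool" where
  "lam_zero E v w a b \<longleftrightarrow> (v = w \<and> a \<noteq> b) \<or> ((v,w) \<in> E \<and> \<not> (a \<noteq> b))"

definition ideal_hom :: "'v set \<Rightarrow> ('v \<times> 'v) set \<Rightarrow> nat \<Rightarrow> ('v word \<Rightarrow> complex) set" where
  "ideal_hom V E c = gideal c V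
     {conv c (proj c v a) (proj c w b) | v w a b.
        v \<in> V \<and> w \<in> V \<and> a < c \<and> b < c \<and> lam_zero E v w a b}"

text \<open>A(G,K_c) \<noteq> 0 iff the ideal is not the whole algebra.\<close>
definition A_nonzero :: "'v set \<Rightarrow> ('v \<times> 'v) set \<Rightarrow> nat \<Rightarrow> bool" where
  "A_nonzero V E c \<longleftrightarrow> ideal_hom V E c \<noteq> gralg c V"

definition chi_alg :: "'v set \<Rightarrow> ('v \<times> 'v) set \<Rightarrow> nat" where
  "chi_alg V E = (LEAST c. c \<ge> 1 \<and> A_nonzero V E c)"

definition chromatic_number :: "'v set \<Rightarrow> ('v \<times> 'v) set \<Rightarrow> nat" where
  "chromatic_number V E = (LEAST c. \<exists>f. (\<forall>v\<in>V. f v < c) \<and> (\<forall>(v,w)\<in>E. f v \<noteq> f w))"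

end

theory Submission
  imports Defs
begin

text \<open>A proper colouring \<open>col\<close> of \<open>G\<close> with \<open>c\<close> colours gives the one-dimensional
  \<open>*\<close>-representation \<open>u_v \<mapsto> \<omega>^(col v)\<close> of \<open>\<complex>[F(n,c)]\<close>, which sends \<open>e_{v,a}\<close> to 1 if
  \<open>a = col v\<close> and to 0 otherwise. It kills every generator of \<open>I(G,K_c)\<close> but not 1, so
  \<open>A(G,K_c) \<noteq> 0\<close>. For \<open>c = 1\<close> the relation \<open>e_{v,0} e_{w,0}\<close> of an edge \<open>vw\<close> is the unit, so a
  graph with an edge has neither a 1-colouring nor \<open>A(G,K_1) \<noteq> 0\<close>.

  Conversely, for \<open>c = 2\<close> we have \<open>e_{v,a} = (1 + (-1)^a u_v)/2\<close>, and subtracting the two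
  relations \<open>e_{v,a} e_{w,a}\<close> of an edge \<open>vw\<close> gives \<open>u_v + u_w \<in> I\<close>. Walking along paths from a
  root \<open>r\<close>, every \<open>u_v\<close> is congruent to \<open>u_r\<close> or to \<open>-u_r\<close> modulo \<open>I\<close>. If some vertex received
  both signs, then \<open>u_r\<close>, hence \<open>u_r^2 = 1\<close>, would lie in \<open>I\<close>; so if \<open>A(G,K_2) \<noteq> 0\<close> the sign is a
  proper 2-colouring.\<close>

section \<open>Reduced words\<close>

lemma reduced_Nil [simp]: "reduced m I []"
  by (simp add: reduced_def)

lemma reduced_Cons:
  "reduced m I ((v,k) # ys) \<longleftrightarrow>
     v \<in> I \<and> 0 < k \<and> k < m \<and> reduced m I ys \<and> (ys \<noteq> [] \<longrightarrow> fst (hd ys) \<noteq> v)"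
  by (cases ys) (auto simp: reduced_def)

lemma reduced_ins:
  assumes "0 < m" "v \<in> I" "reduced m I ys"
  shows "reduced m I (ins m (v,k) ys)"
proof (cases ys)
  case Nil
  then show ?thesis using assms by (simp add: reduced_Cons)
next
  case (Cons a ys')
  obtain w j where "a = (w,j)" by fastforce
  then show ?thesis using assms Cons by (auto simp: reduced_Cons)
qed

lemma reduced_gen: "0 < m \<Longrightarrow> v \<in> I \<Longrightarrow> reduced m I (gen m v)"
  unfolding gen_def by (rule reduced_ins) auto

lemma reduced_wmult:
  assumes "0 < m" "reduced m I xs" "reduced m I ys"
  shows "reduced m I (wmult m xs ys)"
  using assms(2)
proof (induction xs)
  case Nil
  then show ?case using assms by (simp add: wmult_def)
next
  case (Cons a xs)
  obtain v k where a: "a = (v,k)" by fastforce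
  with Cons.prems have "reduced m I xs" "v \<in> I" by (auto simp: reduced_Cons)
  with Cons.IH show ?case by (simp add: wmult_def a reduced_ins assms(1))
qed

lemma wmult_Nil [simp]: "wmult m [] ys = ys"
  by (simp add: wmult_def)

lemma wmult_Nil_right: "reduced m I xs \<Longrightarrow> wmult m xs [] = xs"
proof (induction xs)
  case Nil
  then show ?case by simp
next
  case (Cons a xs)
  obtain v k where a: "a = (v,k)" by fastforce
  with Cons.prems have "reduced m I xs" "k < m" "0 < k" "xs \<noteq> [] \<longrightarrow> fst (hd xs) \<noteq> v"
    by (auto simp: reduced_Cons)
  with Cons.IH show ?case by (cases xs) (auto simp: wmult_def a)
qed

lemma reduced_winv_iff: "reduced m I (winv m x) \<longleftrightarrow> reduced m I x"
proof -
  have "map fst (winv m x) = rev (map fst x)"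
    by (simp add: winv_def rev_map comp_def case_prod_beta)
  moreover have "successively (\<lambda>a b. b \<noteq> a) (map fst x) \<longleftrightarrow> successively (\<noteq>) (map fst x)"
    by (metis (mono_tags) successively_cong)
  ultimately show ?thesis
    by (auto simp: reduced_def winv_def)
qed

lemma winv_winv: "reduced m I x \<Longrightarrow> winv m (winv m x) = x"
  by (induction x) (auto simp: winv_def reduced_Cons)

section \<open>The group algebra\<close>

lemma gralg_iff: "f \<in> gralg m I \<longleftrightarrow> finite (supp f) \<and> (\<forall>x\<in>supp f. reduced m I x)"
  by (simp add: gralg_def)

lemma supp_delta [simp]: "supp (delta w) = {w}"
  by (auto simp: supp_def delta_def)

lemma conv_eq_sum_superset:
  assumes "finite A" "finite B" "supp f \<subseteq> A" "supp g \<subseteq> B"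
  shows "conv m f g z = (\<Sum>(x,y)\<in>A \<times> B. if wmult m x y = z then f x * g y else 0)"
  unfolding conv_def using assms
  by (intro sum.mono_neutral_left) (auto simp: supp_def split: if_splits)

lemma supp_conv_subset:
  assumes "finite (supp f)" "finite (supp g)"
  shows "supp (conv m f g) \<subseteq> (\<lambda>(x,y). wmult m x y) ` (supp f \<times> supp g)"
proof
  fix z assume "z \<in> supp (conv m f g)"
  then have "(\<Sum>(x,y)\<in>supp f \<times> supp g. if wmult m x y = z then f x * g y else 0) \<noteq> 0"
    by (simp add: supp_def conv_def)
  then obtain p where "p \<in> supp f \<times> supp g"
      "(case p of (x,y) \<Rightarrow> if wmult m x y = z then f x * g y else 0) \<noteq> 0"
    by (meson sum.neutral)
  then show "z \<in> (\<lambda>(x,y). wmult m x y) ` (supp f \<times> supp g)"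
    by (force split: if_splits)
qed

lemma conv_delta_delta: "conv m (delta x) (delta y) = delta (wmult m x y)"
  unfolding conv_def supp_delta by (rule ext) (simp add: delta_def)

lemma conv_delta_Nil_right:
  assumes "f \<in> gralg m I"
  shows "conv m f (delta []) = f"
proof
  fix z
  have fin: "finite (supp f)" using assms by (simp add: gralg_iff)
  have "conv m f (delta []) z = (\<Sum>(x,y)\<in>supp f \<times> {[]}. if wmult m x y = z then f x * delta [] y else 0)"
    using fin by (intro conv_eq_sum_superset) auto
  also have "\<dots> = (\<Sum>x\<in>supp f. if x = z then f x else 0)"
    unfolding sum.cartesian_product[symmetric] using assms
    by (intro sum.cong) (auto simp: gralg_iff wmult_Nil_right delta_def)
  also have "\<dots> = f z"
    using fin by (simp add: sum.delta' supp_def)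
  finally show "conv m f (delta []) z = f z" .
qed

lemma conv_smul_delta_Nil_left:
  assumes "finite (supp f)"
  shows "conv m (smul a (delta [])) f = smul a f"
proof
  fix z
  have "supp (smul a (delta [])) \<subseteq> {[]}"
    by (auto simp: supp_def smul_def delta_def)
  then have "conv m (smul a (delta [])) f z
      = (\<Sum>(x,y)\<in>{[]} \<times> supp f. if wmult m x y = z then smul a (delta []) x * f y else 0)"
    using assms by (intro conv_eq_sum_superset) auto
  also have "\<dots> = (\<Sum>y\<in>supp f. if y = z then a * f y else 0)"
    unfolding sum.cartesian_product[symmetric] smul_def delta_def by (simp cong: if_cong)
  also have "\<dots> = smul a f z"
    using assms by (simp add: sum.delta' supp_def smul_def)
  finally show "conv m (smul a (delta [])) f z = smul a f z" .
qed

lemma supp_gstar: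
  assumes "f \<in> gralg m I"
  shows "supp (gstar m f) = winv m ` supp f"
proof -
  have "x \<in> supp (gstar m f) \<longleftrightarrow> x \<in> winv m ` supp f" for x
  proof
    assume x: "x \<in> supp (gstar m f)"
    then have "winv m x \<in> supp f" by (simp add: supp_def gstar_def)
    moreover from this have "winv m (winv m x) = x"
      using assms winv_winv reduced_winv_iff by (metis gralg_iff)
    ultimately show "x \<in> winv m ` supp f" by (metis image_eqI)
  next
    assume "x \<in> winv m ` supp f"
    then obtain y where y: "y \<in> supp f" "x = winv m y" by blast
    with assms have "winv m x = y" by (metis gralg_iff winv_winv)
    with y show "x \<in> supp (gstar m f)"
      by (simp add: supp_def gstar_def)
  qed
  then show ?thesis by blast
qed

lemma zero_in_gralg: "(\<lambda>_. 0) \<in> gralg m I"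
  by (simp add: gralg_iff supp_def)

lemma delta_in_gralg: "reduced m I w \<Longrightarrow> delta w \<in> gralg m I"
  by (simp add: gralg_iff)

lemma smul_in_gralg: "f \<in> gralg m I \<Longrightarrow> smul a f \<in> gralg m I"
  unfolding gralg_iff smul_def supp_def by (auto elim: rev_finite_subset)

lemma add_in_gralg:
  assumes "f \<in> gralg m I" "g \<in> gralg m I"
  shows "(\<lambda>x. f x + g x) \<in> gralg m I"
proof -
  have "supp (\<lambda>x. f x + g x) \<subseteq> supp f \<union> supp g" by (auto simp: supp_def)
  with assms show ?thesis unfolding gralg_iff by (meson UnE finite_Un rev_finite_subset subsetD)
qed

lemma sum_in_gralg:
  "finite K \<Longrightarrow> (\<And>k. k \<in> K \<Longrightarrow> f k \<in> gralg m I) \<Longrightarrow> (\<lambda>x. \<Sum>k\<in>K. f k x) \<in> gralg m I"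
  by (induction K rule: finite_induct) (simp_all add: zero_in_gralg add_in_gralg)

lemma conv_in_gralg:
  assumes "0 < m" "f \<in> gralg m I" "g \<in> gralg m I"
  shows "conv m f g \<in> gralg m I"
proof -
  have fin: "finite (supp f)" "finite (supp g)" using assms by (auto simp: gralg_iff)
  with supp_conv_subset[OF fin] have "finite (supp (conv m f g))"
    by (meson finite_SigmaI finite_imageI finite_subset)
  moreover have "\<forall>x\<in>supp (conv m f g). reduced m I x"
    using supp_conv_subset[OF fin] assms reduced_wmult[OF assms(1)] by (fastforce simp: gralg_iff)
  ultimately show ?thesis by (simp add: gralg_iff)
qed

lemma gstar_in_gralg: "f \<in> gralg m I \<Longrightarrow> gstar m f \<in> gralg m I"
  by (auto simp: gralg_iff supp_gstar reduced_winv_iff)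

lemma gpow_in_gralg: "0 < m \<Longrightarrow> f \<in> gralg m I \<Longrightarrow> gpow m f k \<in> gralg m I"
  by (induction k) (auto simp: gpow_def delta_in_gralg conv_in_gralg)

lemma proj_in_gralg:
  assumes "0 < m" "v \<in> I"
  shows "proj m v a \<in> gralg m I"
proof -
  have "(\<lambda>x. \<Sum>k<m. gpow m (smul (inverse (omega m) ^ a) (delta (gen m v))) k x) \<in> gralg m I"
    using assms by (intro sum_in_gralg gpow_in_gralg smul_in_gralg delta_in_gralg reduced_gen) auto
  from smul_in_gralg[OF this, of "1 / of_nat m"] show ?thesis
    by (simp add: proj_def smul_def)
qed

lemma gideal_subset_gralg:
  assumes "0 < m" "S \<subseteq> gralg m I"
  shows "gideal m I S \<subseteq> gralg m I"
proof
  fix f assume "f \<in> gideal m I S"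
  then show "f \<in> gralg m I"
    by induction (use assms in \<open>auto intro: zero_in_gralg add_in_gralg conv_in_gralg gstar_in_gralg\<close>)
qed

section \<open>The character of a colouring\<close>

lemma omega_power: "omega c ^ n = cis (real n * (2 * pi / real c))"
  by (simp add: omega_def DeMoivre)

lemma omega_neq_zero [simp]: "omega c \<noteq> 0"
  by (simp add: omega_def)

lemma omega_power_self: "0 < c \<Longrightarrow> omega c ^ c = 1"
  by (simp add: omega_power)

lemma omega_power_cong:
  assumes "0 < c" "a mod c = b mod c"
  shows "omega c ^ a = omega c ^ b"
proof -
  have "omega c ^ n = omega c ^ (n mod c)" for n
  proof -
    have "omega c ^ n = (omega c ^ c) ^ (n div c) * omega c ^ (n mod c)"
      by (metis div_mult_mod_eq power_add power_mult mult.commute)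
    then show ?thesis using omega_power_self[OF assms(1)] by simp
  qed
  then show ?thesis using assms(2) by metis
qed

lemma omega_power_mult_mod: "0 < c \<Longrightarrow> omega c ^ (n * (k mod c)) = omega c ^ (n * k)"
  by (intro omega_power_cong) (simp_all add: mod_mult_right_eq)

lemma omega_power_inj:
  assumes "0 < c" "i < c" "j < c" "omega c ^ i = omega c ^ j"
  shows "i = j"
proof -
  have "cis (real i * (2 * pi / real c)) / cis (real j * (2 * pi / real c)) = 1"
    using assms(4) by (simp add: omega_power)
  then have "cis ((real i - real j) * (2 * pi / real c)) = 1"
    by (simp only: cis_divide left_diff_distrib)
  then have "cos ((real i - real j) * (2 * pi / real c)) = 1"
    by (metis cis.sel(1) one_complex.sel(1))
  then obtain n :: int where "(real i - real j) * (2 * pi / real c) = of_int n * 2 * pi"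
    using cos_one_2pi_int by blast
  with assms(1) have "(real i - real j) * (2 * pi) = (of_int n * real c) * (2 * pi)"
    by (simp add: field_simps)
  then have "real i - real j = of_int n * real c"
    by simp
  then have n: "int i - int j = n * int c"
    by (metis of_int_eq_iff of_int_mult of_int_diff of_int_of_nat_eq)
  have "n = 0"
  proof (rule ccontr)
    assume "n \<noteq> 0"
    with assms(1) have "int c \<le> \<bar>n * int c\<bar>" by (simp add: abs_mult mult_le_cancel_right1)
    with n assms(2,3) show False by linarith
  qed
  with n show ?thesis by simp
qed

definition colour_char :: "nat \<Rightarrow> ('v \<Rightarrow> nat) \<Rightarrow> 'v word \<Rightarrow> complex" where
  "colour_char c col x = omega c ^ sum_list (map (\<lambda>(v,k). col v * k) x)"

definition colour_hom :: "nat \<Rightarrow> ('v \<Rightarrow> nat) \<Rightarrow> ('v word \<Rightarrow> complex) \<Rightarrow> complex" where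
  "colour_hom c col f = (\<Sum>x\<in>supp f. f x * colour_char c col x)"

lemma colour_char_Nil [simp]: "colour_char c col [] = 1"
  by (simp add: colour_char_def)

lemma colour_char_Cons: "colour_char c col ((v,k) # ys) = omega c ^ (col v * k) * colour_char c col ys"
  by (simp add: colour_char_def power_add)

lemma colour_char_ins:
  assumes "0 < c"
  shows "colour_char c col (ins c (v,k) ys) = omega c ^ (col v * k) * colour_char c col ys"
proof -
  have k: "omega c ^ (col v * k) = omega c ^ (col v * (k mod c))"
    using omega_power_mult_mod[OF assms] by simp
  show ?thesis
  proof (cases ys)
    case Nil
    then show ?thesis using k by (simp add: colour_char_Cons)
  next
    case (Cons a ys')
    obtain w j where a: "a = (w,j)" by fastforce
    have "omega c ^ (col v * k) * omega c ^ (col v * j) = omega c ^ (col v * ((k + j) mod c))"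
      using omega_power_mult_mod[OF assms, of "col v" "k + j"] by (simp add: distrib_left power_add)
    then show ?thesis using k by (auto simp: Cons a colour_char_Cons mult.assoc)
  qed
qed

lemma colour_char_wmult:
  "0 < c \<Longrightarrow> colour_char c col (wmult c xs ys) = colour_char c col xs * colour_char c col ys"
proof (induction xs)
  case Nil
  then show ?case by simp
next
  case (Cons a xs)
  obtain v k where "a = (v,k)" by fastforce
  with Cons show ?case by (simp add: wmult_def colour_char_ins colour_char_Cons)
qed

lemma colour_char_winv:
  assumes "0 < c" "reduced c I y"
  shows "colour_char c col (winv c y) = cnj (colour_char c col y)"
proof -
  define S where "S = sum_list (map (\<lambda>(v,k). col v * k) y)"
  define T where "T = sum_list (map (\<lambda>(v,k). col v * (c - k)) y)"
  have "\<forall>(v,k)\<in>set y. k \<le> c"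
    using assms(2) by (auto simp: reduced_def)
  then have "T + S = c * sum_list (map (\<lambda>(v,k). col v) y)"
    unfolding S_def T_def by (induction y) (auto simp: algebra_simps diff_mult_distrib2)
  then have "omega c ^ T * omega c ^ S = 1"
    using omega_power_self[OF assms(1)] by (simp flip: power_add add: power_mult)
  then have "omega c ^ T = cnj (omega c ^ S)"
    by (simp add: field_simps omega_power cis_cnj flip: cis_inverse)
  moreover have "colour_char c col (winv c y) = omega c ^ T"
    unfolding colour_char_def winv_def T_def
    by (simp add: comp_def case_prod_beta flip: rev_map) (simp add: case_prod_unfold)
  ultimately show ?thesis by (simp add: colour_char_def S_def)
qed

lemma colour_hom_eq_sum_superset:
  "finite A \<Longrightarrow> supp f \<subseteq> A \<Longrightarrow> colour_hom c col f = (\<Sum>x\<in>A. f x * colour_char c col x)"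
  unfolding colour_hom_def by (rule sum.mono_neutral_left) (auto simp: supp_def)

lemma colour_hom_delta [simp]: "colour_hom c col (delta w) = colour_char c col w"
  unfolding colour_hom_def supp_delta by (simp add: delta_def)

lemma colour_hom_smul: "colour_hom c col (smul a f) = a * colour_hom c col f"
proof (cases "a = 0")
  case True
  then show ?thesis by (simp add: colour_hom_def smul_def supp_def)
next
  case False
  then have "supp (smul a f) = supp f" by (auto simp: supp_def smul_def)
  then show ?thesis by (simp add: colour_hom_def smul_def sum_distrib_left mult_ac)
qed

lemma colour_hom_add:
  assumes "finite (supp f)" "finite (supp g)"
  shows "colour_hom c col (\<lambda>x. f x + g x) = colour_hom c col f + colour_hom c col g"
proof -
  let ?A = "supp f \<union> supp g"
  have "supp (\<lambda>x. f x + g x) \<subseteq> ?A" by (auto simp: supp_def)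
  with assms show ?thesis
    by (simp add: colour_hom_eq_sum_superset[of ?A] sum.distrib distrib_right)
qed

lemma colour_hom_sum:
  assumes "finite K" "\<And>k. k \<in> K \<Longrightarrow> f k \<in> gralg m I"
  shows "colour_hom c col (\<lambda>x. \<Sum>k\<in>K. f k x) = (\<Sum>k\<in>K. colour_hom c col (f k))"
  using assms
proof (induction K rule: finite_induct)
  case empty
  then show ?case by (simp add: colour_hom_def supp_def)
next
  case (insert a K)
  have "finite (supp (f a))" "finite (supp (\<lambda>x. \<Sum>k\<in>K. f k x))"
    using insert sum_in_gralg[of K f m I] by (auto simp: gralg_iff)
  with insert show ?case by (simp add: colour_hom_add)
qed

lemma colour_hom_conv:
  assumes "0 < c" "finite (supp f)" "finite (supp g)"
  shows "colour_hom c col (conv c f g) = colour_hom c col f * colour_hom c col g"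
proof -
  let ?P = "supp f \<times> supp g"
  let ?C = "(\<lambda>(x,y). wmult c x y) ` ?P"
  let ?t = "\<lambda>p z. if wmult c (fst p) (snd p) = z then f (fst p) * g (snd p) else 0"
  have fin: "finite ?C" using assms by auto
  have "colour_hom c col (conv c f g) = (\<Sum>z\<in>?C. conv c f g z * colour_char c col z)"
    using colour_hom_eq_sum_superset[OF fin supp_conv_subset[OF assms(2,3)]] .
  also have "\<dots> = (\<Sum>z\<in>?C. \<Sum>p\<in>?P. ?t p z * colour_char c col z)"
    by (simp add: conv_def sum_distrib_right case_prod_beta)
  also have "\<dots> = (\<Sum>p\<in>?P. \<Sum>z\<in>?C. ?t p z * colour_char c col z)"
    by (rule sum.swap)
  also have "\<dots> = (\<Sum>p\<in>?P. f (fst p) * g (snd p) * colour_char c col (wmult c (fst p) (snd p)))"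
  proof (rule sum.cong[OF refl])
    fix p assume "p \<in> ?P"
    then have "wmult c (fst p) (snd p) \<in> ?C" by (force simp: case_prod_beta)
    with fin show "(\<Sum>z\<in>?C. ?t p z * colour_char c col z)
        = f (fst p) * g (snd p) * colour_char c col (wmult c (fst p) (snd p))"
      by (simp add: if_distrib[of "\<lambda>u. u * _"] sum.delta' cong: if_cong)
  qed
  also have "\<dots> = (\<Sum>p\<in>?P. (f (fst p) * colour_char c col (fst p)) * (g (snd p) * colour_char c col (snd p)))"
    using assms(1) by (simp add: colour_char_wmult mult_ac)
  also have "\<dots> = colour_hom c col f * colour_hom c col g"
    unfolding colour_hom_def sum_product sum.cartesian_product by (simp add: case_prod_beta)
  finally show ?thesis .
qed

lemma colour_hom_gstar:
  assumes "0 < c" "f \<in> gralg c I"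
  shows "colour_hom c col (gstar c f) = cnj (colour_hom c col f)"
proof -
  have red: "reduced c I y" if "y \<in> supp f" for y
    using assms(2) that by (simp add: gralg_iff)
  then have "inj_on (winv c) (supp f)"
    by (metis inj_onI winv_winv)
  then have "colour_hom c col (gstar c f)
      = (\<Sum>y\<in>supp f. gstar c f (winv c y) * colour_char c col (winv c y))"
    by (simp add: colour_hom_def supp_gstar[OF assms(2)] sum.reindex)
  also have "\<dots> = (\<Sum>y\<in>supp f. cnj (f y * colour_char c col y))"
  proof (rule sum.cong[OF refl])
    fix y assume "y \<in> supp f"
    with red have y: "reduced c I y" by blast
    show "gstar c f (winv c y) * colour_char c col (winv c y) = cnj (f y * colour_char c col y)"
      using winv_winv[OF y] colour_char_winv[OF assms(1) y] by (simp add: gstar_def)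
  qed
  also have "\<dots> = cnj (colour_hom c col f)"
    by (simp add: colour_hom_def)
  finally show ?thesis .
qed

lemma colour_hom_gpow:
  assumes "0 < c" "f \<in> gralg c I"
  shows "colour_hom c col (gpow c f k) = colour_hom c col f ^ k"
proof (induction k)
  case 0
  then show ?case by (simp add: gpow_def)
next
  case (Suc k)
  have "finite (supp (gpow c f k))" "finite (supp f)"
    using gpow_in_gralg[OF assms] assms by (auto simp: gralg_iff)
  with Suc assms(1) show ?case
    by (simp add: gpow_def colour_hom_conv)
qed

lemma sum_powers_root_of_unity:
  fixes z :: complex
  assumes "z ^ c = 1" "z \<noteq> 1"
  shows "(\<Sum>k<c. z ^ k) = 0"
  using assms by (simp add: geometric_sum)

lemma colour_hom_proj:
  assumes "0 < c" "v \<in> I" "a < c" "col v < c"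
  shows "colour_hom c col (proj c v a) = (if a = col v then 1 else 0)"
proof -
  define F where "F = smul (inverse (omega c) ^ a) (delta (gen c v))"
  define z where "z = inverse (omega c) ^ a * omega c ^ col v"
  have F: "F \<in> gralg c I"
    unfolding F_def using assms by (intro smul_in_gralg delta_in_gralg reduced_gen)
  have "colour_hom c col F = z"
    using colour_char_ins[OF assms(1), of col v 1 "[]"] by (simp add: F_def colour_hom_smul gen_def z_def)
  moreover have "proj c v a = smul (1 / of_nat c) (\<lambda>x. \<Sum>k<c. gpow c F k x)"
    by (simp add: proj_def smul_def F_def)
  ultimately have "colour_hom c col (proj c v a) = (1 / of_nat c) * (\<Sum>k<c. z ^ k)"
    using colour_hom_sum[of "{..<c}" "gpow c F" c I] gpow_in_gralg[OF assms(1) F]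
    by (simp add: colour_hom_smul colour_hom_gpow[OF assms(1) F])
  moreover have "z = 1 \<longleftrightarrow> a = col v"
    using omega_power_inj[OF assms(1) assms(4) assms(3)]
    by (auto simp: z_def power_inverse field_simps)
  moreover have "z ^ c = 1"
  proof -
    have "z ^ c = (inverse (omega c ^ c)) ^ a * (omega c ^ c) ^ col v"
      by (simp add: z_def power_mult_distrib power_inverse flip: power_mult) (simp add: mult.commute)
    then show ?thesis using omega_power_self[OF assms(1)] by simp
  qed
  ultimately show ?thesis
    using assms(1) by (auto simp: sum_powers_root_of_unity)
qed

section \<open>Colourings give non-trivial quotients\<close>

definition colouring :: "'v set \<Rightarrow> ('v \<times> 'v) set \<Rightarrow> nat \<Rightarrow> ('v \<Rightarrow> nat) \<Rightarrow> bool" where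
  "colouring V E c f \<longleftrightarrow> (\<forall>v\<in>V. f v < c) \<and> (\<forall>(v,w)\<in>E. f v \<noteq> f w)"

lemma ideal_hom_subset_gralg: "0 < c \<Longrightarrow> ideal_hom V E c \<subseteq> gralg c V"
  unfolding ideal_hom_def by (rule gideal_subset_gralg) (auto intro!: conv_in_gralg proj_in_gralg)

lemma not_A_nonzero_if_unit:
  assumes "0 < c" "delta [] \<in> ideal_hom V E c"
  shows "\<not> A_nonzero V E c"
proof -
  have "f \<in> ideal_hom V E c" if "f \<in> gralg c V" for f
  proof -
    have "conv c f (delta []) \<in> ideal_hom V E c"
      using assms(2) that unfolding ideal_hom_def by (rule gideal.left)
    then show ?thesis using conv_delta_Nil_right[OF that] by simp
  qed
  with ideal_hom_subset_gralg[OF assms(1)] show ?thesis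
    unfolding A_nonzero_def by blast
qed

lemma colour_hom_ideal_hom_eq_0:
  assumes "0 < c" "colouring V E c col" "f \<in> ideal_hom V E c"
  shows "colour_hom c col f = 0"
proof -
  have fin: "finite (supp g)" if "g \<in> ideal_hom V E c" for g
    using ideal_hom_subset_gralg[OF assms(1), of V E] that by (auto simp: gralg_iff)
  have proj: "colour_hom c col (proj c v a) = (if a = col v then 1 else 0)" if "v \<in> V" "a < c" for v a
    using that assms(2) by (intro colour_hom_proj[OF assms(1)]) (auto simp: colouring_def)
  from assms(3) show ?thesis
    unfolding ideal_hom_def
  proof induction
    case (base s)
    then obtain v w a b where s: "s = conv c (proj c v a) (proj c w b)"
        and vw: "v \<in> V" "w \<in> V" "a < c" "b < c" "lam_zero E v w a b"
      by blast
    have "finite (supp (proj c v a))" "finite (supp (proj c w b))"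
      using proj_in_gralg[OF assms(1) vw(1), of a] proj_in_gralg[OF assms(1) vw(2), of b]
      by (auto simp: gralg_iff)
    then have "colour_hom c col s = colour_hom c col (proj c v a) * colour_hom c col (proj c w b)"
      unfolding s by (rule colour_hom_conv[OF assms(1)])
    with vw assms(2) show ?case by (auto simp: proj lam_zero_def colouring_def)
  next
    case zero
    then show ?case by (simp add: colour_hom_def supp_def)
  next
    case (add f g)
    with fin show ?case by (simp add: ideal_hom_def colour_hom_add)
  next
    case (left f a)
    with fin assms(1) show ?case by (simp add: ideal_hom_def gralg_iff colour_hom_conv)
  next
    case (right f a)
    with fin assms(1) show ?case by (simp add: ideal_hom_def gralg_iff colour_hom_conv)
  next
    case (star f)
    then have "f \<in> gralg c V"
      using ideal_hom_subset_gralg[OF assms(1), of V E] by (auto simp: ideal_hom_def)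
    with star show ?case by (simp add: colour_hom_gstar[OF assms(1)])
  qed
qed

lemma A_nonzero_if_colouring:
  assumes "0 < c" "colouring V E c col"
  shows "A_nonzero V E c"
proof -
  have "delta [] \<notin> ideal_hom V E c"
    using colour_hom_ideal_hom_eq_0[OF assms] by fastforce
  then show ?thesis
    using delta_in_gralg[of c V "[]"] unfolding A_nonzero_def by auto
qed

lemma proj_one: "proj 1 v 0 = delta []"
  by (rule ext) (simp add: proj_def gpow_def)

lemma not_A_nonzero_one:
  assumes "graph V E" "(v,w) \<in> E"
  shows "\<not> A_nonzero V E 1"
proof -
  have "conv 1 (proj 1 v 0) (proj 1 w 0) \<in> ideal_hom V E 1"
    using assms unfolding ideal_hom_def by (intro gideal.base) (auto simp: lam_zero_def graph_def)
  moreover have "conv 1 (proj 1 v 0) (proj 1 w 0) = delta []"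
    unfolding proj_one conv_delta_delta by (simp add: wmult_def)
  ultimately show ?thesis by (intro not_A_nonzero_if_unit) auto
qed

section \<open>Two colours\<close>

lemma ideal_hom_smul:
  assumes "0 < c" "f \<in> ideal_hom V E c"
  shows "smul a f \<in> ideal_hom V E c"
proof -
  have "finite (supp f)"
    using ideal_hom_subset_gralg[OF assms(1), of V E] assms(2) by (auto simp: gralg_iff)
  then have "smul a f = conv c (smul a (delta [])) f"
    by (simp add: conv_smul_delta_Nil_left)
  also have "\<dots> \<in> ideal_hom V E c"
    using assms(2) unfolding ideal_hom_def by (intro gideal.left smul_in_gralg delta_in_gralg) auto
  finally show ?thesis .
qed

lemma ideal_hom_diff:
  assumes "0 < c" "f \<in> ideal_hom V E c" "g \<in> ideal_hom V E c"
  shows "(\<lambda>x. f x - g x) \<in> ideal_hom V E c"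
proof -
  have "(\<lambda>x. f x + smul (-1) g x) \<in> ideal_hom V E c"
    using assms ideal_hom_smul[OF assms(1,3)] unfolding ideal_hom_def by (intro gideal.add)
  then show ?thesis by (simp add: smul_def)
qed

lemma proj_two: "proj 2 v a = (\<lambda>x. (1/2) * (delta [] x + (-1) ^ a * delta [(v,1)] x))"
proof -
  define F where "F = smul (inverse (omega 2) ^ a) (delta (gen 2 v))"
  have "F \<in> gralg 2 {v}"
    unfolding F_def by (intro smul_in_gralg delta_in_gralg reduced_gen) auto
  then have "gpow 2 F 1 = F"
    using conv_delta_Nil_right by (simp add: gpow_def)
  then have "(\<Sum>k<2. gpow 2 F k x) = delta [] x + F x" for x
    by (simp add: numeral_2_eq_2 gpow_def)
  moreover have "omega 2 = -1" by (simp add: omega_def)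
  ultimately show ?thesis
    by (intro ext) (simp add: proj_def F_def[symmetric] F_def smul_def gen_def)
qed

lemma conv_two_letters:
  assumes "v \<noteq> w"
  shows "conv 2 (\<lambda>x. (1/2) * (delta [] x + s * delta [(v,1)] x)) (\<lambda>x. (1/2) * (delta [] x + t * delta [(w,1)] x)) z
    = (1/4) * (delta [] z + t * delta [(w,1)] z + s * delta [(v,1)] z + s * t * delta [(v,1),(w,1)] z)"
    (is "conv 2 ?f ?g z = ?r")
proof -
  have "supp ?f \<subseteq> {[], [(v,1)]}" "supp ?g \<subseteq> {[], [(w,1)]}"
    by (auto simp: supp_def delta_def)
  then have "conv 2 ?f ?g z
      = (\<Sum>(x,y)\<in>{[], [(v,1)]} \<times> {[], [(w,1)]}. if wmult 2 x y = z then ?f x * ?g y else 0)"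
    by (intro conv_eq_sum_superset) auto
  also have "\<dots> = ?r"
    unfolding sum.cartesian_product[symmetric]
    using assms by (simp add: wmult_def delta_def cong: if_cong)
  finally show ?thesis .
qed

lemma ideal_hom_two_edge:
  assumes "graph V E" "(v,w) \<in> E"
  shows "(\<lambda>x. delta [(v,1)] x + delta [(w,1)] x) \<in> ideal_hom V E 2"
proof -
  have vw: "v \<in> V" "w \<in> V" "v \<noteq> w" using assms by (auto simp: graph_def)
  have rel: "conv 2 (proj 2 v a) (proj 2 w a) \<in> ideal_hom V E 2" if "a < 2" for a
    unfolding ideal_hom_def using vw assms(2) that
    by (intro gideal.base) (auto simp: lam_zero_def)
  have p0: "proj 2 u 0 = (\<lambda>x. (1/2) * (delta [] x + 1 * delta [(u,1)] x))" for u
    using proj_two[of u 0] by simp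
  have p1: "proj 2 u 1 = (\<lambda>x. (1/2) * (delta [] x + (-1) * delta [(u,1)] x))" for u
    using proj_two[of u 1] by simp
  have "(\<lambda>z. conv 2 (proj 2 v 0) (proj 2 w 0) z - conv 2 (proj 2 v 1) (proj 2 w 1) z) \<in> ideal_hom V E 2"
    using rel[of 0] rel[of 1] by (intro ideal_hom_diff) auto
  also have "(\<lambda>z. conv 2 (proj 2 v 0) (proj 2 w 0) z - conv 2 (proj 2 v 1) (proj 2 w 1) z)
      = smul (1/2) (\<lambda>x. delta [(v,1)] x + delta [(w,1)] x)"
    unfolding p0 p1 conv_two_letters[OF vw(3)] by (rule ext) (simp add: smul_def algebra_simps)
  finally have "smul 2 (smul (1/2) (\<lambda>x. delta [(v,1)] x + delta [(w,1)] x)) \<in> ideal_hom V E 2"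
    by (rule ideal_hom_smul[rotated]) simp
  moreover have "smul 2 (smul (1/2) (\<lambda>x. delta [(v,1)] x + delta [(w,1)] x))
      = (\<lambda>x. delta [(v,1)] x + delta [(w,1)] x)"
    by (rule ext) (simp add: smul_def)
  ultimately show ?thesis by simp
qed

lemma unit_in_ideal_hom_two:
  assumes "r \<in> V"
    and "(\<lambda>x. delta [(v,1)] x + delta [(r,1)] x) \<in> ideal_hom V E 2"
    and "(\<lambda>x. delta [(v,1)] x - delta [(r,1)] x) \<in> ideal_hom V E 2"
  shows "delta [] \<in> ideal_hom V E 2"
proof -
  have "(\<lambda>z. (delta [(v,1)] z + delta [(r,1)] z) - (delta [(v,1)] z - delta [(r,1)] z))
      \<in> ideal_hom V E 2"
    using ideal_hom_diff[OF _ assms(2,3)] by simp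
  then have "smul (1/2) (\<lambda>z. (delta [(v,1)] z + delta [(r,1)] z) - (delta [(v,1)] z - delta [(r,1)] z))
      \<in> ideal_hom V E 2"
    by (simp add: ideal_hom_smul)
  moreover have "smul (1/2) (\<lambda>z. (delta [(v,1)] z + delta [(r,1)] z) - (delta [(v,1)] z - delta [(r,1)] z))
      = delta [(r,1)]"
    by (rule ext) (simp add: smul_def)
  ultimately have "delta [(r,1)] \<in> ideal_hom V E 2"
    by simp
  then have "conv 2 (delta [(r,1)]) (delta [(r,1)]) \<in> ideal_hom V E 2"
    using assms(1) unfolding ideal_hom_def by (intro gideal.left delta_in_gralg) (auto simp: reduced_def)
  then show ?thesis
    by (simp add: conv_delta_delta wmult_def)
qed

lemma colouring_if_A_nonzero_two:
  assumes G: "graph V E" and "connected_graph V E" and r: "r \<in> V" and "A_nonzero V E 2"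
  shows "\<exists>col. colouring V E 2 col"
proof -
  let ?I = "ideal_hom V E 2"
  define P where "P v \<longleftrightarrow> (\<lambda>x. delta [(v,1)] x - delta [(r,1)] x) \<in> ?I" for v
  define N where "N v \<longleftrightarrow> (\<lambda>x. delta [(v,1)] x + delta [(r,1)] x) \<in> ?I" for v
  have flip: "(P v \<longrightarrow> N w) \<and> (N v \<longrightarrow> P w)" if "(v,w) \<in> E" for v w
  proof -
    have e: "(\<lambda>x. delta [(v,1)] x + delta [(w,1)] x) \<in> ?I"
      using ideal_hom_two_edge[OF G that] .
    have "(\<lambda>z. (delta [(v,1)] z + delta [(w,1)] z) - (delta [(v,1)] z - delta [(r,1)] z)) \<in> ?I"
      if "P v" using ideal_hom_diff[OF _ e that[unfolded P_def]] by simp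
    moreover have "(\<lambda>z. (delta [(v,1)] z + delta [(w,1)] z) - (delta [(v,1)] z + delta [(r,1)] z)) \<in> ?I"
      if "N v" using ideal_hom_diff[OF _ e that[unfolded N_def]] by simp
    ultimately show ?thesis
      unfolding P_def N_def by (simp add: algebra_simps)
  qed
  have not_both: "\<not> (P v \<and> N v)" for v
    using unit_in_ideal_hom_two[OF r] not_A_nonzero_if_unit[of 2 V E] assms(4)
    by (auto simp: P_def N_def)
  have signed: "P v \<or> N v" if "v \<in> V" for v
  proof -
    have "(r,v) \<in> E\<^sup>*" using assms(2) r that by (simp add: connected_graph_def)
    then show ?thesis
    proof (induction rule: rtrancl_induct)
      case base
      then show ?case by (simp add: P_def ideal_hom_def gideal.zero)
    next
      case (step y z)
      with flip show ?case by blast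
    qed
  qed
  define col where "col v = (if P v then 0 else 1 :: nat)" for v
  have "col v \<noteq> col w" if "(v,w) \<in> E" for v w
  proof -
    have "v \<in> V" "w \<in> V" using G that by (auto simp: graph_def)
    then have "P v \<or> N v" "P w \<or> N w" by (simp_all add: signed)
    then show ?thesis using flip[OF that] not_both[of v] not_both[of w] by (auto simp: col_def)
  qed
  moreover have "col v < 2" for v
    by (simp add: col_def)
  ultimately have "colouring V E 2 col"
    by (auto simp: colouring_def)
  then show ?thesis by blast
qed

section \<open>Chromatic numbers\<close>

lemma Least_eq_2_iff:
  fixes P :: "nat \<Rightarrow> bool"
  assumes "\<exists>n. P n"
  shows "(LEAST n. P n) = 2 \<longleftrightarrow> P 2 \<and> \<not> P 0 \<and> \<not> P 1"
proof
  assume "(LEAST n. P n) = 2"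
  then show "P 2 \<and> \<not> P 0 \<and> \<not> P 1"
    using LeastI_ex[OF assms] Least_le[of P 0] Least_le[of P 1] by auto
next
  assume P: "P 2 \<and> \<not> P 0 \<and> \<not> P 1"
  show "(LEAST n. P n) = 2"
  proof (rule Least_equality)
    fix n assume "P n"
    with P have "n \<noteq> 0" "n \<noteq> 1" by metis+
    then show "2 \<le> n" by linarith
  qed (use P in blast)
qed

lemma colouring_card:
  assumes "graph V E"
  shows "\<exists>f. colouring V E (card V) f"
proof -
  have "finite V" using assms by (simp add: graph_def)
  then obtain f where f: "bij_betw f V {0..<card V}"
    using ex_bij_betw_finite_nat by blast
  have "f v \<noteq> f w" if "(v,w) \<in> E" for v w
  proof -
    have "v \<in> V" "w \<in> V" "v \<noteq> w" using that assms by (auto simp: graph_def)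
    with f show ?thesis by (auto simp: bij_betw_def inj_on_def)
  qed
  moreover have "f v < card V" if "v \<in> V" for v
    using that f by (auto simp: bij_betw_def)
  ultimately show ?thesis
    unfolding colouring_def by blast
qed

lemma chromatic_number_eq_2_iff:
  assumes "graph V E" "(v,w) \<in> E"
  shows "chromatic_number V E = 2 \<longleftrightarrow> (\<exists>f. colouring V E 2 f)"
proof -
  have "v \<in> V" "w \<in> V" using assms by (auto simp: graph_def)
  have "\<not> colouring V E c f" if "c \<le> 1" for c f
  proof
    assume "colouring V E c f"
    with \<open>v \<in> V\<close> \<open>w \<in> V\<close> assms(2) have "f v < c" "f w < c" "f v \<noteq> f w"
      by (auto simp: colouring_def)
    with that show False by linarith
  qed
  with colouring_card[OF assms(1)] show ?thesis
    unfolding chromatic_number_def colouring_def[symmetric] by (subst Least_eq_2_iff) auto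
qed

lemma chi_alg_eq_2_iff:
  assumes "graph V E" "(v,w) \<in> E"
  shows "chi_alg V E = 2 \<longleftrightarrow> A_nonzero V E 2"
proof -
  obtain f where f: "colouring V E (card V) f"
    using colouring_card[OF assms(1)] by blast
  have "v \<in> V" "finite V" using assms by (auto simp: graph_def)
  then have "0 < card V" by (auto simp: card_gt_0_iff)
  with f have "\<exists>c. 1 \<le> c \<and> A_nonzero V E c"
    using A_nonzero_if_colouring by (intro exI[of _ "card V"]) auto
  then show ?thesis
    unfolding chi_alg_def using not_A_nonzero_one[OF assms] by (subst Least_eq_2_iff) auto
qed

lemma A_nonzero_two_iff_colouring:
  assumes "graph V E" "connected_graph V E" "r \<in> V"
  shows "A_nonzero V E 2 \<longleftrightarrow> (\<exists>f. colouring V E 2 f)"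
  using colouring_if_A_nonzero_two[OF assms] A_nonzero_if_colouring[of 2] by auto

lemma connected_graph_has_edge:
  assumes "graph V E" "connected_graph V E" "1 < card V"
  obtains v w where "(v,w) \<in> E"
proof -
  have "finite V" using assms(1) by (simp add: graph_def)
  then obtain a b where "a \<in> V" "b \<in> V" "a \<noteq> b"
    using assms(3) card_le_Suc0_iff_eq by (metis One_nat_def not_le)
  with assms(2) have "(a,b) \<in> E\<^sup>+"
    by (auto simp: connected_graph_def rtrancl_eq_or_trancl)
  then show ?thesis
    using that by (meson tranclE)
qed

theorem mainTheorem16:
  fixes V :: "'v set" and E :: "('v \<times> 'v) set"
  assumes "graph V E" and "connected_graph V E" and "card V > 1"
  shows "chi_alg V E = 2 \<longleftrightarrow> chromatic_number V E = 2"
proof -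
  obtain v w where e: "(v,w) \<in> E"
    using connected_graph_has_edge[OF assms] .
  then have "v \<in> V"
    using assms(1) by (auto simp: graph_def)
  then show ?thesis
    using chi_alg_eq_2_iff[OF assms(1) e] chromatic_number_eq_2_iff[OF assms(1) e]
      A_nonzero_two_iff_colouring[OF assms(1,2)] by simp
qed

end
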